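(* Let $n\ge 1$ and let $\Phi=\Phi(A,O,Y,\bar{\mathbf d})$ be an $n$-mode Gaussian superchannel, with $A=(a_{kl})$, $O=(o_{kl})$, $Y=(y_{kl})$ real $2n\times 2n$ matrices and $\bar{\mathbf d}=(\bar d_1,\dots,\bar d_{2n})^{\mathrm T}\in\mathbb R^{2n}$. Then $\Phi$ is a real Gaussian superchannel if and only if $$\bar d_{2k}=0\quad\text{and}\quad y_{2k-1,2l}=0\qquad\text{for all }k,l\in\{1,\dots,n\},\tag{a}$$ and moreover either $$a_{2k,2l-1}=a_{2k,2l}=0\qquad\text{for all }k,l\in\{1,\dots,n\},\tag{b}$$ or $$a_{2k-1,2l}=a_{2k,2l-1}=0\ \text{ and }\ o_{2k-1,2l}=o_{2k,2l-1}=0\qquad\text{for all }k,l\in\{1,\dots,n\}.\tag{c}$$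
   Context: Fix $n\ge1$. Let $\Delta_n=\bigoplus_{k=1}^n\begin{pmatrix}0&1\\-1&0\end{pmatrix}$ and $\Sigma_n=\bigoplus_{k=1}^n\begin{pmatrix}1&0\\0&-1\end{pmatrix}$ (both $2n\times2n$). An $n$-mode Gaussian channel is identified with a triple $\phi=\phi(T,N,\mathbf d)$, where $T=(t_{kl})$ and $N=(n_{kl})$ are real $2n\times 2n$ matrices with $N=N^{\mathrm T}\ge0$, $\mathbf d=(d_1,\dots,d_{2n})^{\mathrm T}\in\mathbb R^{2n}$, and $N+i\Delta_n-iT\Delta_nT^{\mathrm T}\ge0$ (it maps a Gaussian state with displacement vector $\bar{\mathbf d}_0$ and covariance matrix $\nu$ to the Gaussian state with displacement $T\bar{\mathbf d}_0+\mathbf d$ and covariance matrix $T\nu T^{\mathrm T}+N$). Such a channel is called real if $d_{2k}=0$ and $n_{2k-1,2l}=0$ for all $k,l\in\{1,\dots,n\}$, and either $t_{2k,2l-1}=t_{2k,2l}=0$ for all $k,l$, or $t_{2k-1,2l}=t_{2k,2l-1}=0$ for all $k,l$. An $n$-mode Gaussian superchannel is identified with a quadruple $\Phi=\Phi(A,O,Y,\bar{\mathbf d})$ of real $2n\times2n$ matrices $A,O,Y$ and a vector $\bar{\mathbf d}\in\mathbb R^{2n}$ with $Y=Y^{\mathrm T}$, $OO^{\mathrm T}=I_{2n}$, $Y+i\Delta_n-iA\Delta_nA^{\mathrm T}\ge0$ and $i\Delta_n-iO\Delta_nO^{\mathrm T}\ge0$; it acts on Gaussian channels by $\Phi(\phi(T,N,\mathbf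 d))=\phi(AT\Sigma_nO^{\mathrm T}\Sigma_n,\ ANA^{\mathrm T}+Y,\ A\mathbf d+\bar{\mathbf d})$. A Gaussian superchannel is called real if it maps every real Gaussian channel to a real Gaussian channel. *)

theory Defs
  imports Complex_Main "Jordan_Normal_Form.Matrix"
begin

text \<open>Conventions: matrices are Jordan_Normal_Form matrices of dimension 2n x 2n with
  0-based indices; the paper's 1-based index 2k-1 (resp. 2k) for k in 1..n corresponds to
  the 0-based index 2k (resp. 2k+1) for k < n.\<close>

definition Delta :: "nat \<Rightarrow> real mat" where
  "Delta n = mat (2*n) (2*n) (\<lambda>(i,j).
     if even i \<and> j = i + 1 then 1 else if odd i \<and> i = j + 1 then -1 else 0)"

definition Sigma :: "nat \<Rightarrow> real mat" where
  "Sigma n = mat (2*n) (2*n) (\<lambda>(i,j). if i = j then (if even i then 1 else -1) else 0)"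

definition cmat :: "real mat \<Rightarrow> complex mat" where
  "cmat M = map_mat complex_of_real M"

definition psd_real :: "nat \<Rightarrow> real mat \<Rightarrow> bool" where
  "psd_real m M \<longleftrightarrow> M \<in> carrier_mat m m \<and>
     (\<forall>v :: nat \<Rightarrow> real. (\<Sum>i<m. \<Sum>j<m. v i * M $$ (i,j) * v j) \<ge> 0)"

definition psd_complex :: "nat \<Rightarrow> complex mat \<Rightarrow> bool" where
  "psd_complex m M \<longleftrightarrow> M \<in> carrier_mat m m \<and>
     (\<forall>z :: nat \<Rightarrow> complex.
        let q = (\<Sum>i<m. \<Sum>j<m. cnj (z i) * M $$ (i,j) * z j) in Im q = 0 \<and> Re q \<ge> 0)"

definition gaussian_channel :: "nat \<Rightarrow> real mat \<Rightarrow> real mat \<Rightarrow> real vec \<Rightarrow> bool" where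
  "gaussian_channel n T N d \<longleftrightarrow>
     T \<in> carrier_mat (2*n) (2*n) \<and> N \<in> carrier_mat (2*n) (2*n) \<and> d \<in> carrier_vec (2*n) \<and>
     transpose_mat N = N \<and> psd_real (2*n) N \<and>
     psd_complex (2*n) (cmat N + \<i> \<cdot>\<^sub>m cmat (Delta n)
                          - \<i> \<cdot>\<^sub>m cmat (T * Delta n * transpose_mat T))"

definition real_gaussian_channel :: "nat \<Rightarrow> real mat \<Rightarrow> real mat \<Rightarrow> real vec \<Rightarrow> bool" where
  "real_gaussian_channel n T N d \<longleftrightarrow> gaussian_channel n T N d \<and>
     (\<forall>k<n. d $ (2*k+1) = 0) \<and>
     (\<forall>k<n. \<forall>l<n. N $$ (2*k, 2*l+1) = 0) \<and>
     ((\<forall>k<n. \<forall>l<n. T $$ (2*k+1, 2*l) = 0 \<and> T $$ (2*k+1, 2*l+1) = 0) \<or>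
      (\<forall>k<n. \<forall>l<n. T $$ (2*k, 2*l+1) = 0 \<and> T $$ (2*k+1, 2*l) = 0))"

definition gaussian_superchannel :: "nat \<Rightarrow> real mat \<Rightarrow> real mat \<Rightarrow> real mat \<Rightarrow> real vec \<Rightarrow> bool" where
  "gaussian_superchannel n A Om Y db \<longleftrightarrow>
     A \<in> carrier_mat (2*n) (2*n) \<and> Om \<in> carrier_mat (2*n) (2*n) \<and> Y \<in> carrier_mat (2*n) (2*n) \<and>
     db \<in> carrier_vec (2*n) \<and>
     transpose_mat Y = Y \<and> Om * transpose_mat Om = 1\<^sub>m (2*n) \<and>
     psd_complex (2*n) (cmat Y + \<i> \<cdot>\<^sub>m cmat (Delta n)
                          - \<i> \<cdot>\<^sub>m cmat (A * Delta n * transpose_mat A)) \<and>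
     psd_complex (2*n) (\<i> \<cdot>\<^sub>m cmat (Delta n) - \<i> \<cdot>\<^sub>m cmat (Om * Delta n * transpose_mat Om))"

text \<open>Action of the superchannel Phi(A,O,Y,db) on the channel phi(T,N,d).\<close>
definition super_T :: "nat \<Rightarrow> real mat \<Rightarrow> real mat \<Rightarrow> real mat \<Rightarrow> real mat" where
  "super_T n A Om T = A * T * Sigma n * transpose_mat Om * Sigma n"
definition super_N :: "real mat \<Rightarrow> real mat \<Rightarrow> real mat \<Rightarrow> real mat" where
  "super_N A Y N = A * N * transpose_mat A + Y"
definition super_d :: "real mat \<Rightarrow> real vec \<Rightarrow> real vec \<Rightarrow> real vec" where
  "super_d A db d = A *\<^sub>v d + db"

definition real_gaussian_superchannel :: "nat \<Rightarrow> real mat \<Rightarrow> real mat \<Rightarrow> real mat \<Rightarrow> real vec \<Rightarrow> bool" where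
  "real_gaussian_superchannel n A Om Y db \<longleftrightarrow> gaussian_superchannel n A Om Y db \<and>
     (\<forall>T N d. real_gaussian_channel n T N d \<longrightarrow>
        real_gaussian_channel n (super_T n A Om T) (super_N A Y N) (super_d A db d))"

end

theory Submission
  imports Defs "Jordan_Normal_Form.Determinant"
begin

text \<open>A superchannel maps Gaussian channels to Gaussian channels: with w = A^T z, u = T^T w and
  p = Om Sigma u, the uncertainty form of the output channel at z is the sum of those of A at z, of T
  at w and of Om at p, because Sigma Delta Sigma = -Delta. Realness is a parity condition on the
  quadrature indices, and conditions (b) and (c) are stable under the products occurring in the
  action, which gives sufficiency. For necessity, identity channels with real displacements force (a)
  and a_{odd,even} = 0. A channel T = w e_c^T with c odd and w supported on odd indices is sent to
  T' = +-(A w)(Sigma Om e_c)^T; if some odd entry of A w is nonzero, realness of T' forces every odd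
  column of Om to live on odd rows and A w to vanish on even indices. Finally, an orthogonal matrix
  that is block triangular for the splitting into even and odd indices is block diagonal.\<close>

lemma sum_less_double: "(\<Sum>i<2*n. f i) = (\<Sum>k<n. f (2*k) + f (2*k+1 :: nat))"
  by (induction n) (simp_all add: algebra_simps)

lemma all_less_double: "(\<forall>i<2*n. P i) \<longleftrightarrow> (\<forall>k<n. P (2*k) \<and> P (2*k+1 :: nat))"
proof safe
  fix i assume "\<forall>k<n. P (2*k) \<and> P (2*k+1)" "i < 2*n"
  then show "P i"
    by (cases "even i") (auto elim!: evenE oddE)
qed auto

lemma index_mult_mat_sum:
  "A \<in> carrier_mat m k \<Longrightarrow> B \<in> carrier_mat k l \<Longrightarrow> i < m \<Longrightarrow> j < l \<Longrightarrow>
   (A * B) $$ (i,j) = (\<Sum>r<k. A $$ (i,r) * B $$ (r,j))"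
  by (auto simp: scalar_prod_def atLeast0LessThan intro!: sum.cong)

section \<open>Hermitian forms of real matrices\<close>

definition sesq_form :: "nat \<Rightarrow> real mat \<Rightarrow> (nat \<Rightarrow> complex) \<Rightarrow> (nat \<Rightarrow> complex) \<Rightarrow> complex" where
  "sesq_form m R x y = (\<Sum>i<m. \<Sum>j<m. cnj (x i) * of_real (R $$ (i,j)) * y j)"

abbreviation qform :: "nat \<Rightarrow> real mat \<Rightarrow> (nat \<Rightarrow> complex) \<Rightarrow> complex" where
  "qform m R z \<equiv> sesq_form m R z z"

definition transpose_apply :: "nat \<Rightarrow> real mat \<Rightarrow> (nat \<Rightarrow> complex) \<Rightarrow> nat \<Rightarrow> complex" where
  "transpose_apply m P z r = (if r < m then \<Sum>i<m. of_real (P $$ (i,r)) * z i else 0)"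

lemma sesq_form_add:
  "R1 \<in> carrier_mat m m \<Longrightarrow> R2 \<in> carrier_mat m m \<Longrightarrow>
   sesq_form m (R1 + R2) x y = sesq_form m R1 x y + sesq_form m R2 x y"
  unfolding sesq_form_def by (auto simp: sum.distrib[symmetric] algebra_simps intro!: sum.cong)

lemma sesq_form_uminus: "R \<in> carrier_mat m m \<Longrightarrow> sesq_form m (- R) x y = - sesq_form m R x y"
  unfolding sesq_form_def by (auto simp: sum_negf[symmetric] intro!: sum.cong)

lemma sesq_form_zero [simp]: "sesq_form m (0\<^sub>m m m) x y = 0"
  unfolding sesq_form_def by simp

lemma sesq_form_mult_left:
  assumes "P \<in> carrier_mat m m" "M \<in> carrier_mat m m"
  shows "sesq_form m (P * M) x y = sesq_form m M (transpose_apply m P x) y"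
proof -
  have "sesq_form m (P * M) x y =
      (\<Sum>i<m. \<Sum>j<m. \<Sum>r<m. cnj (x i) * of_real (P $$ (i,r)) * of_real (M $$ (r,j)) * y j)"
    unfolding sesq_form_def
    by (intro sum.cong refl) (simp add: index_mult_mat_sum[OF assms] sum_distrib_left sum_distrib_right mult.assoc)
  also have "\<dots> = (\<Sum>r<m. \<Sum>j<m. \<Sum>i<m. cnj (x i) * of_real (P $$ (i,r)) * of_real (M $$ (r,j)) * y j)"
    by (subst sum.swap, subst (2) sum.swap, rule sum.cong, simp, rule sum.swap)
  also have "\<dots> = sesq_form m M (transpose_apply m P x) y"
    by (simp add: sesq_form_def transpose_apply_def cnj_sum sum_distrib_left sum_distrib_right mult_ac)
  finally show ?thesis .
qed

lemma sesq_form_mult_right: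
  assumes "M \<in> carrier_mat m m" "P \<in> carrier_mat m m"
  shows "sesq_form m (M * transpose_mat P) x y = sesq_form m M x (transpose_apply m P y)"
proof -
  have entry: "(M * transpose_mat P) $$ (i,j) = (\<Sum>s<m. M $$ (i,s) * P $$ (j,s))" if "i < m" "j < m" for i j
    using assms that by (auto simp: scalar_prod_def atLeast0LessThan intro!: sum.cong)
  have "sesq_form m (M * transpose_mat P) x y =
      (\<Sum>i<m. \<Sum>j<m. \<Sum>s<m. cnj (x i) * of_real (M $$ (i,s)) * of_real (P $$ (j,s)) * y j)"
    unfolding sesq_form_def by (intro sum.cong refl) (simp add: entry sum_distrib_left sum_distrib_right mult.assoc)
  also have "\<dots> = (\<Sum>i<m. \<Sum>s<m. \<Sum>j<m. cnj (x i) * of_real (M $$ (i,s)) * of_real (P $$ (j,s)) * y j)"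
    by (intro sum.cong refl sum.swap)
  also have "\<dots> = sesq_form m M x (transpose_apply m P y)"
    by (simp add: sesq_form_def transpose_apply_def sum_distrib_left mult_ac)
  finally show ?thesis .
qed

lemma qform_congruence:
  assumes "P \<in> carrier_mat m m" "R \<in> carrier_mat m m"
  shows "qform m (P * R * transpose_mat P) z = qform m R (transpose_apply m P z)"
proof -
  have "qform m (P * R * transpose_mat P) z = sesq_form m (P * R) z (transpose_apply m P z)"
    using assms by (intro sesq_form_mult_right) auto
  also have "\<dots> = qform m R (transpose_apply m P z)"
    by (rule sesq_form_mult_left[OF assms])
  finally show ?thesis .
qed

lemma transpose_apply_mult:
  assumes "P \<in> carrier_mat m m" "Q \<in> carrier_mat m m"
  shows "transpose_apply m Q (transpose_apply m P z) = transpose_apply m (P * Q) z"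
proof
  fix r
  show "transpose_apply m Q (transpose_apply m P z) r = transpose_apply m (P * Q) z r"
  proof (cases "r < m")
    case True
    have "transpose_apply m Q (transpose_apply m P z) r =
        (\<Sum>i<m. \<Sum>k<m. of_real (Q $$ (i,r)) * (of_real (P $$ (k,i)) * z k))"
      using True by (simp add: transpose_apply_def sum_distrib_left)
    also have "\<dots> = (\<Sum>k<m. \<Sum>i<m. of_real (Q $$ (i,r)) * (of_real (P $$ (k,i)) * z k))"
      by (rule sum.swap)
    also have "\<dots> = transpose_apply m (P * Q) z r"
      using True unfolding transpose_apply_def
      by (simp add: sum_distrib_left index_mult_mat_sum[OF assms] sum_distrib_right mult_ac)
    finally show ?thesis .
  qed (simp add: transpose_apply_def)
qed

lemma transpose_apply_one: "transpose_apply m (1\<^sub>m m) (transpose_apply m P z) = transpose_apply m P z"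
proof
  fix r
  have "(\<Sum>i<m. of_real (1\<^sub>m m $$ (i,r)) * transpose_apply m P z i) = transpose_apply m P z r" if "r < m"
    using that by (simp add: if_distrib[of "\<lambda>x. of_real x * _"] cong: if_cong)
  then show "transpose_apply m (1\<^sub>m m) (transpose_apply m P z) r = transpose_apply m P z r"
    by (auto simp: transpose_apply_def)
qed

lemma transpose_apply_of_real:
  "transpose_apply m P (\<lambda>i. of_real (v i)) = (\<lambda>r. of_real (if r < m then \<Sum>i<m. P $$ (i,r) * v i else 0))"
  by (auto simp: transpose_apply_def)

lemma qform_of_real: "qform m R (\<lambda>i. of_real (v i)) = of_real (\<Sum>i<m. \<Sum>j<m. v i * R $$ (i,j) * v j)"
  by (simp add: sesq_form_def)

lemma psd_real_iff_qform:
  "psd_real m R \<longleftrightarrow> R \<in> carrier_mat m m \<and> (\<forall>v. 0 \<le> qform m R (\<lambda>i. of_real (v i)))"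
  by (simp add: psd_real_def qform_of_real less_eq_complex_def)

lemma psd_complex_iff_qform:
  assumes "M1 \<in> carrier_mat m m" "M2 \<in> carrier_mat m m" "M3 \<in> carrier_mat m m"
  shows "psd_complex m (cmat M1 + \<i> \<cdot>\<^sub>m cmat M2 - \<i> \<cdot>\<^sub>m cmat M3) \<longleftrightarrow>
    (\<forall>z. 0 \<le> qform m M1 z + \<i> * qform m M2 z - \<i> * qform m M3 z)"
proof -
  have carrier: "cmat M1 + \<i> \<cdot>\<^sub>m cmat M2 - \<i> \<cdot>\<^sub>m cmat M3 \<in> carrier_mat m m"
    using assms unfolding cmat_def by (simp add: minus_carrier_mat)
  have form: "(\<Sum>i<m. \<Sum>j<m. cnj (z i) * (cmat M1 + \<i> \<cdot>\<^sub>m cmat M2 - \<i> \<cdot>\<^sub>m cmat M3) $$ (i,j) * z j) =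
      qform m M1 z + \<i> * qform m M2 z - \<i> * qform m M3 z" for z
    using assms
    by (auto simp: sesq_form_def cmat_def sum_distrib_left sum.distrib[symmetric] sum_subtractf[symmetric]
        algebra_simps intro!: sum.cong)
  have nonneg: "(Im q = 0 \<and> 0 \<le> Re q) \<longleftrightarrow> 0 \<le> q" for q :: complex
    by (auto simp: less_eq_complex_def)
  show ?thesis
    unfolding psd_complex_def Let_def form nonneg using carrier by blast
qed

lemma psd_complex_iff_qform':
  assumes "M2 \<in> carrier_mat m m" "M3 \<in> carrier_mat m m"
  shows "psd_complex m (\<i> \<cdot>\<^sub>m cmat M2 - \<i> \<cdot>\<^sub>m cmat M3) \<longleftrightarrow>
    (\<forall>z. 0 \<le> \<i> * qform m M2 z - \<i> * qform m M3 z)"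
proof -
  have "\<i> \<cdot>\<^sub>m cmat M2 - \<i> \<cdot>\<^sub>m cmat M3 = cmat (0\<^sub>m m m) + \<i> \<cdot>\<^sub>m cmat M2 - \<i> \<cdot>\<^sub>m cmat M3"
    using assms by (intro eq_matI) (auto simp: cmat_def)
  then show ?thesis
    using psd_complex_iff_qform[OF zero_carrier_mat assms] by simp
qed

section \<open>The symplectic form and the sign flip\<close>

lemma Delta_dim [simp]: "dim_row (Delta n) = 2*n" "dim_col (Delta n) = 2*n"
  by (simp_all add: Delta_def)

lemma Delta_carrier [simp]: "Delta n \<in> carrier_mat (2*n) (2*n)"
  by (simp add: Delta_def)

lemma Sigma_dim [simp]: "dim_row (Sigma n) = 2*n" "dim_col (Sigma n) = 2*n"
  by (simp_all add: Sigma_def)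

lemma Sigma_carrier [simp]: "Sigma n \<in> carrier_mat (2*n) (2*n)"
  by (simp add: Sigma_def)

lemma Sigma_index: "i < 2*n \<Longrightarrow> j < 2*n \<Longrightarrow> Sigma n $$ (i,j) = (if i = j then (-1)^i else 0)"
  by (simp add: Sigma_def)

lemma transpose_Sigma: "transpose_mat (Sigma n) = Sigma n"
  by (rule eq_matI) (auto simp: Sigma_def)

lemma mult_Sigma_left:
  assumes "X \<in> carrier_mat (2*n) c" "i < 2*n" "j < c"
  shows "(Sigma n * X) $$ (i,j) = (-1)^i * X $$ (i,j)"
proof -
  have "(Sigma n * X) $$ (i,j) = (\<Sum>r<2*n. Sigma n $$ (i,r) * X $$ (r,j))"
    using assms by (intro index_mult_mat_sum) auto
  also have "\<dots> = (\<Sum>r<2*n. if r = i then (-1)^i * X $$ (i,j) else 0)"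
    using assms by (intro sum.cong) (auto simp: Sigma_index)
  finally show ?thesis using assms by simp
qed

lemma mult_Sigma_right:
  assumes "X \<in> carrier_mat r (2*n)" "i < r" "j < 2*n"
  shows "(X * Sigma n) $$ (i,j) = X $$ (i,j) * (-1)^j"
proof -
  have "(X * Sigma n) $$ (i,j) = (\<Sum>s<2*n. X $$ (i,s) * Sigma n $$ (s,j))"
    using assms by (intro index_mult_mat_sum) auto
  also have "\<dots> = (\<Sum>s<2*n. if s = j then X $$ (i,j) * (-1)^j else 0)"
    using assms by (intro sum.cong) (auto simp: Sigma_index)
  finally show ?thesis using assms by simp
qed

lemma Delta_index:
  "i < 2*n \<Longrightarrow> j < 2*n \<Longrightarrow>
   Delta n $$ (i,j) = (if even i \<and> j = i + 1 then 1 else if odd i \<and> i = j + 1 then -1 else 0)"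
  by (simp add: Delta_def)

text \<open>Delta only couples indices of opposite parity, where the two signs of Sigma differ.\<close>
lemma Sigma_Delta_Sigma: "Sigma n * Delta n * transpose_mat (Sigma n) = - Delta n"
proof (rule eq_matI)
  fix i j assume "i < dim_row (- Delta n)" "j < dim_col (- Delta n)"
  then have ij: "i < 2*n" "j < 2*n" by (simp_all add: Delta_def)
  then have "(Sigma n * Delta n * transpose_mat (Sigma n)) $$ (i,j) = (-1)^i * Delta n $$ (i,j) * (-1)^j"
    using mult_Sigma_right[OF mult_carrier_mat[OF Sigma_carrier Delta_carrier]]
      mult_Sigma_left[OF Delta_carrier] by (simp add: transpose_Sigma)
  also have "\<dots> = (-1)^(i+j) * Delta n $$ (i,j)"
    by (simp add: power_add)
  also have "\<dots> = (- Delta n) $$ (i,j)"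
  proof (cases "odd (i + j)")
    case False
    then have "Delta n $$ (i,j) = 0" using ij by (auto simp: Delta_index)
    then show ?thesis using ij by simp
  qed (use ij in simp)
  finally show "(Sigma n * Delta n * transpose_mat (Sigma n)) $$ (i,j) = (- Delta n) $$ (i,j)" .
qed (simp_all add: Delta_def Sigma_def)

lemma qform_one: "qform m (1\<^sub>m m) z = (\<Sum>i<m. cnj (z i) * z i)"
  unfolding sesq_form_def by (intro sum.cong refl) (simp add: if_distrib[of "\<lambda>x. _ * of_real x * _"] cong: if_cong)

lemma double_neq_Suc_double: "2*k \<noteq> Suc (2*l)" "Suc (2*k) \<noteq> 2*(l::nat)"
  by presburger+

lemma qform_Delta:
  "qform (2*n) (Delta n) z = (\<Sum>k<n. cnj (z (2*k)) * z (2*k+1) - cnj (z (2*k+1)) * z (2*k))"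
  unfolding sesq_form_def sum_less_double
  by (intro sum.cong refl) (auto simp: Delta_def sum.distrib double_neq_Suc_double if_distrib[of "\<lambda>x. _ * of_real x * _"] cong: if_cong)

text \<open>The form of I + iDelta is a sum of the squares |z(2k) + i z(2k+1)|^2.\<close>
lemma qform_one_Delta_nonneg: "0 \<le> qform (2*n) (1\<^sub>m (2*n)) z + \<i> * qform (2*n) (Delta n) z"
proof -
  have "qform (2*n) (1\<^sub>m (2*n)) z + \<i> * qform (2*n) (Delta n) z =
      (\<Sum>k<n. cnj (z (2*k) + \<i> * z (2*k+1)) * (z (2*k) + \<i> * z (2*k+1)))"
    unfolding qform_one qform_Delta sum_less_double sum_distrib_left sum.distrib[symmetric]
    by (intro sum.cong refl) (simp add: algebra_simps)
  also have "0 \<le> \<dots>"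
  proof (intro sum_nonneg)
    show "0 \<le> cnj w * w" for w :: complex
    proof -
      have "cnj w * w = of_real ((cmod w)\<^sup>2)"
        by (metis complex_norm_square mult.commute)
      then show ?thesis by (simp add: less_eq_complex_def)
    qed
  qed
  finally show ?thesis .
qed

section \<open>Superchannels preserve Gaussian channels\<close>

lemma super_T_carrier:
  "A \<in> carrier_mat (2*n) (2*n) \<Longrightarrow> Om \<in> carrier_mat (2*n) (2*n) \<Longrightarrow> T \<in> carrier_mat (2*n) (2*n) \<Longrightarrow>
   super_T n A Om T \<in> carrier_mat (2*n) (2*n)"
  unfolding super_T_def using Sigma_carrier by (meson mult_carrier_mat transpose_carrier_mat)

lemma super_N_carrier:
  "A \<in> carrier_mat m m \<Longrightarrow> Y \<in> carrier_mat m m \<Longrightarrow> N \<in> carrier_mat m m \<Longrightarrow> super_N A Y N \<in> carrier_mat m m"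
  by (simp add: super_N_def)

lemma super_d_carrier:
  "A \<in> carrier_mat m m \<Longrightarrow> db \<in> carrier_vec m \<Longrightarrow> d \<in> carrier_vec m \<Longrightarrow> super_d A db d \<in> carrier_vec m"
  by (simp add: super_d_def)

lemma transpose_congruence:
  fixes A N :: "'a::comm_semiring_0 mat"
  assumes "A \<in> carrier_mat m k" "N \<in> carrier_mat k k" "transpose_mat N = N"
  shows "transpose_mat (A * N * transpose_mat A) = A * N * transpose_mat A"
proof -
  have "transpose_mat (A * N * transpose_mat A) = transpose_mat (transpose_mat A) * transpose_mat (A * N)"
    by (rule transpose_mult) (use assms in auto)
  also have "\<dots> = A * (N * transpose_mat A)"
    using assms by (simp only: transpose_transpose transpose_mult[of A m k N k])
  also have "\<dots> = A * N * transpose_mat A"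
    using assms by (simp add: assoc_mult_mat[of A m k N k "transpose_mat A" m])
  finally show ?thesis .
qed

lemma psd_complex_congruence_iff:
  assumes "M \<in> carrier_mat (2*n) (2*n)" "P \<in> carrier_mat (2*n) (2*n)"
  shows "psd_complex (2*n) (cmat M + \<i> \<cdot>\<^sub>m cmat (Delta n) - \<i> \<cdot>\<^sub>m cmat (P * Delta n * transpose_mat P)) \<longleftrightarrow>
    (\<forall>z. 0 \<le> qform (2*n) M z + \<i> * qform (2*n) (Delta n) z
              - \<i> * qform (2*n) (Delta n) (transpose_apply (2*n) P z))"
proof -
  have "P * Delta n * transpose_mat P \<in> carrier_mat (2*n) (2*n)"
    using assms(2) Delta_carrier by (meson mult_carrier_mat transpose_carrier_mat)
  from psd_complex_iff_qform[OF assms(1) Delta_carrier this] show ?thesis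
    unfolding qform_congruence[OF assms(2) Delta_carrier] .
qed

lemma psd_complex_congruence_iff':
  assumes "P \<in> carrier_mat (2*n) (2*n)"
  shows "psd_complex (2*n) (\<i> \<cdot>\<^sub>m cmat (Delta n) - \<i> \<cdot>\<^sub>m cmat (P * Delta n * transpose_mat P)) \<longleftrightarrow>
    (\<forall>z. 0 \<le> \<i> * qform (2*n) (Delta n) z - \<i> * qform (2*n) (Delta n) (transpose_apply (2*n) P z))"
proof -
  have "P * Delta n * transpose_mat P \<in> carrier_mat (2*n) (2*n)"
    using assms Delta_carrier by (meson mult_carrier_mat transpose_carrier_mat)
  from psd_complex_iff_qform'[OF Delta_carrier this] show ?thesis
    unfolding qform_congruence[OF assms Delta_carrier] .
qed

lemma qform_super_N:
  assumes "A \<in> carrier_mat m m" "Y \<in> carrier_mat m m" "N \<in> carrier_mat m m"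
  shows "qform m (super_N A Y N) z = qform m N (transpose_apply m A z) + qform m Y z"
proof -
  have ANA: "A * N * transpose_mat A \<in> carrier_mat m m"
    using assms by simp
  show ?thesis
    unfolding super_N_def sesq_form_add[OF ANA assms(2)] qform_congruence[OF assms(1,3)] ..
qed

lemma psd_real_super_N:
  assumes A: "A \<in> carrier_mat (2*n) (2*n)" and Y: "Y \<in> carrier_mat (2*n) (2*n)"
    and N: "N \<in> carrier_mat (2*n) (2*n)" and "psd_real (2*n) N"
    and HA: "psd_complex (2*n) (cmat Y + \<i> \<cdot>\<^sub>m cmat (Delta n) - \<i> \<cdot>\<^sub>m cmat (A * Delta n * transpose_mat A))"
  shows "psd_real (2*n) (super_N A Y N)"
proof -
  have "0 \<le> qform (2*n) (super_N A Y N) (\<lambda>i. of_real (v i))" for v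
  proof -
    let ?z = "\<lambda>i. complex_of_real (v i)"
    let ?w = "\<lambda>r. if r < 2*n then \<Sum>i<2*n. A $$ (i,r) * v i else 0"
    have "\<forall>v. 0 \<le> qform (2*n) N (\<lambda>i. of_real (v i))"
      using \<open>psd_real (2*n) N\<close> unfolding psd_real_iff_qform by blast
    then have N_part: "0 \<le> qform (2*n) N (transpose_apply (2*n) A ?z)"
      unfolding transpose_apply_of_real by (rule allE[of _ ?w])
    have "0 \<le> qform (2*n) Y ?z + \<i> * qform (2*n) (Delta n) ?z
        - \<i> * qform (2*n) (Delta n) (transpose_apply (2*n) A ?z)"
      using HA unfolding psd_complex_congruence_iff[OF Y A] by blast
    then have Y_part: "0 \<le> qform (2*n) Y ?z"
      unfolding transpose_apply_of_real qform_of_real by (simp add: less_eq_complex_def)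
    show ?thesis
      using N_part Y_part by (simp add: qform_super_N[OF A Y N])
  qed
  then show ?thesis
    using A Y N by (simp add: psd_real_iff_qform super_N_carrier)
qed

lemma psd_complex_super_T:
  assumes A: "A \<in> carrier_mat (2*n) (2*n)" and O: "Om \<in> carrier_mat (2*n) (2*n)"
    and Y: "Y \<in> carrier_mat (2*n) (2*n)" and T: "T \<in> carrier_mat (2*n) (2*n)"
    and N: "N \<in> carrier_mat (2*n) (2*n)" and O_orth: "Om * transpose_mat Om = 1\<^sub>m (2*n)"
    and HA: "psd_complex (2*n) (cmat Y + \<i> \<cdot>\<^sub>m cmat (Delta n) - \<i> \<cdot>\<^sub>m cmat (A * Delta n * transpose_mat A))"
    and HO: "psd_complex (2*n) (\<i> \<cdot>\<^sub>m cmat (Delta n) - \<i> \<cdot>\<^sub>m cmat (Om * Delta n * transpose_mat Om))"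
    and HT: "psd_complex (2*n) (cmat N + \<i> \<cdot>\<^sub>m cmat (Delta n) - \<i> \<cdot>\<^sub>m cmat (T * Delta n * transpose_mat T))"
  shows "psd_complex (2*n) (cmat (super_N A Y N) + \<i> \<cdot>\<^sub>m cmat (Delta n)
     - \<i> \<cdot>\<^sub>m cmat (super_T n A Om T * Delta n * transpose_mat (super_T n A Om T)))"
  unfolding psd_complex_congruence_iff[OF super_N_carrier[OF A Y N] super_T_carrier[OF A O T]]
proof
  fix z
  let ?D = "qform (2*n) (Delta n)" and ?S = "transpose_apply (2*n) (Sigma n)"
  define w where "w = transpose_apply (2*n) A z"
  define u where "u = transpose_apply (2*n) T w"
  define p where "p = transpose_apply (2*n) (transpose_mat Om) (?S u)"
  have flip: "?D (?S x) = - ?D x" for x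
    unfolding qform_congruence[OF Sigma_carrier Delta_carrier, symmetric] Sigma_Delta_Sigma
      sesq_form_uminus[OF Delta_carrier] ..
  have OT: "transpose_mat Om \<in> carrier_mat (2*n) (2*n)"
    using O by simp
  have AT: "A * T \<in> carrier_mat (2*n) (2*n)" and ATS: "A * T * Sigma n \<in> carrier_mat (2*n) (2*n)"
    and ATSO: "A * T * Sigma n * transpose_mat Om \<in> carrier_mat (2*n) (2*n)"
    using A T O Sigma_carrier by (meson mult_carrier_mat transpose_carrier_mat)+
  have "transpose_apply (2*n) (super_T n A Om T) z = ?S p"
    unfolding super_T_def p_def u_def w_def transpose_apply_mult[OF A T] transpose_apply_mult[OF AT Sigma_carrier]
      transpose_apply_mult[OF ATS OT] transpose_apply_mult[OF ATSO Sigma_carrier]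
    by (rule refl)
  then have T'_part: "?D (transpose_apply (2*n) (super_T n A Om T) z) = - ?D p"
    by (simp only: flip)
  have "transpose_apply (2*n) Om p = ?S u"
    unfolding p_def transpose_apply_mult[OF OT O] mat_mult_left_right_inverse[OF O OT O_orth]
    by (rule transpose_apply_one)
  then have O_part: "?D (transpose_apply (2*n) Om p) = - ?D u"
    by (simp only: flip)
  have "0 \<le> qform (2*n) Y z + \<i> * ?D z - \<i> * ?D w"
    using HA unfolding psd_complex_congruence_iff[OF Y A] w_def by blast
  moreover have "0 \<le> qform (2*n) N w + \<i> * ?D w - \<i> * ?D u"
    using HT unfolding psd_complex_congruence_iff[OF N T] u_def by blast
  moreover have "0 \<le> \<i> * ?D p - \<i> * ?D (transpose_apply (2*n) Om p)"
    using HO unfolding psd_complex_congruence_iff'[OF O] by blast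
  ultimately have "0 \<le> (qform (2*n) Y z + \<i> * ?D z - \<i> * ?D w) + (qform (2*n) N w + \<i> * ?D w - \<i> * ?D u)
      + (\<i> * ?D p - \<i> * ?D (transpose_apply (2*n) Om p))"
    by (intro add_nonneg_nonneg)
  also have "\<dots> = qform (2*n) (super_N A Y N) z + \<i> * ?D z - \<i> * ?D (transpose_apply (2*n) (super_T n A Om T) z)"
    unfolding T'_part O_part qform_super_N[OF A Y N] w_def[symmetric] by (simp add: algebra_simps)
  finally show "0 \<le> qform (2*n) (super_N A Y N) z + \<i> * ?D z - \<i> * ?D (transpose_apply (2*n) (super_T n A Om T) z)" .
qed

section \<open>Parity structure and sufficiency\<close>

definition odd_rows_zero :: "'a::zero mat \<Rightarrow> bool" where
  "odd_rows_zero M \<longleftrightarrow> (\<forall>i<dim_row M. \<forall>j<dim_col M. odd i \<longrightarrow> M $$ (i,j) = 0)"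

definition parity_preserving :: "'a::zero mat \<Rightarrow> bool" where
  "parity_preserving M \<longleftrightarrow> (\<forall>i<dim_row M. \<forall>j<dim_col M. odd i \<noteq> odd j \<longrightarrow> M $$ (i,j) = 0)"

definition even_supported :: "'a::zero vec \<Rightarrow> bool" where
  "even_supported v \<longleftrightarrow> (\<forall>i<dim_vec v. odd i \<longrightarrow> v $ i = 0)"

lemma odd_rows_zero_mult:
  fixes A B :: "'a::semiring_0 mat"
  assumes "odd_rows_zero A" "dim_col A = dim_row B"
  shows "odd_rows_zero (A * B)"
  using assms unfolding odd_rows_zero_def by (auto simp: scalar_prod_def intro!: sum.neutral)

lemma parity_preserving_mult_odd_rows_zero:
  fixes A B :: "'a::semiring_0 mat"
  assumes "parity_preserving A" "odd_rows_zero B" "dim_col A = dim_row B"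
  shows "odd_rows_zero (A * B)"
  unfolding odd_rows_zero_def
proof (intro allI impI)
  fix i j assume ij: "i < dim_row (A * B)" "j < dim_col (A * B)" "odd i"
  have "A $$ (i,k) * B $$ (k,j) = 0" if "k < dim_row B" for k
    using assms ij that by (cases "odd k") (auto simp: odd_rows_zero_def parity_preserving_def)
  then show "(A * B) $$ (i,j) = 0"
    using ij assms(3) by (auto simp: scalar_prod_def intro!: sum.neutral)
qed

lemma parity_preserving_mult:
  fixes A B :: "'a::semiring_0 mat"
  assumes "parity_preserving A" "parity_preserving B" "dim_col A = dim_row B"
  shows "parity_preserving (A * B)"
  unfolding parity_preserving_def
proof (intro allI impI)
  fix i j assume ij: "i < dim_row (A * B)" "j < dim_col (A * B)" "odd i \<noteq> odd j"
  have "A $$ (i,k) * B $$ (k,j) = 0" if "k < dim_row B" for k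
    using assms ij that by (cases "odd k = odd i") (auto simp: parity_preserving_def)
  then show "(A * B) $$ (i,j) = 0"
    using ij assms(3) by (auto simp: scalar_prod_def intro!: sum.neutral)
qed

lemma parity_preserving_transpose: "parity_preserving M \<Longrightarrow> parity_preserving (transpose_mat M)"
  unfolding parity_preserving_def by auto

lemma parity_preserving_add:
  fixes A B :: "'a::monoid_add mat"
  assumes "parity_preserving A" "parity_preserving B" "A \<in> carrier_mat r c" "B \<in> carrier_mat r c"
  shows "parity_preserving (A + B)"
  using assms unfolding parity_preserving_def by auto

lemma parity_preserving_Sigma: "parity_preserving (Sigma n)"
  unfolding parity_preserving_def by (auto simp: Sigma_def)

lemma parity_preserving_one: "parity_preserving (1\<^sub>m m)"
  unfolding parity_preserving_def by auto

lemma symmetric_odd_rows_zero_parity_preserving: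
  assumes "transpose_mat M = M" "odd_rows_zero M"
  shows "parity_preserving M"
  unfolding parity_preserving_def
proof (intro allI impI)
  fix i j assume ij: "i < dim_row M" "j < dim_col M" "odd i \<noteq> odd j"
  have dims: "dim_row M = dim_col M"
    using arg_cong[OF assms(1), of dim_row] by simp
  show "M $$ (i,j) = 0"
  proof (cases "odd i")
    case False
    then have "M $$ (j,i) = 0"
      using assms(2) ij dims unfolding odd_rows_zero_def by auto
    then show ?thesis
      using arg_cong[OF assms(1), of "\<lambda>X. X $$ (i,j)"] ij dims by simp
  qed (use assms(2) ij in \<open>auto simp: odd_rows_zero_def\<close>)
qed

lemma even_supported_mult_mat_vec:
  fixes A :: "'a::semiring_0 mat"
  assumes "odd_rows_zero A \<or> parity_preserving A" "even_supported v" "dim_col A = dim_vec v"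
  shows "even_supported (A *\<^sub>v v)"
  using assms unfolding even_supported_def odd_rows_zero_def parity_preserving_def
  by (auto simp: scalar_prod_def intro!: sum.neutral)

lemma even_supported_add:
  fixes v w :: "'a::monoid_add vec"
  shows "even_supported v \<Longrightarrow> even_supported w \<Longrightarrow> dim_vec v = dim_vec w \<Longrightarrow> even_supported (v + w)"
  unfolding even_supported_def by auto

lemma odd_rows_zero_iff:
  "M \<in> carrier_mat (2*n) (2*n) \<Longrightarrow>
   odd_rows_zero M \<longleftrightarrow> (\<forall>k<n. \<forall>l<n. M $$ (2*k+1, 2*l) = 0 \<and> M $$ (2*k+1, 2*l+1) = 0)"
  unfolding odd_rows_zero_def by (auto simp: all_less_double)

lemma parity_preserving_iff:
  "M \<in> carrier_mat (2*n) (2*n) \<Longrightarrow>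
   parity_preserving M \<longleftrightarrow> (\<forall>k<n. \<forall>l<n. M $$ (2*k, 2*l+1) = 0 \<and> M $$ (2*k+1, 2*l) = 0)"
  unfolding parity_preserving_def by (auto simp: all_less_double)

lemma parity_preserving_symmetric_iff:
  assumes "M \<in> carrier_mat (2*n) (2*n)" "transpose_mat M = M"
  shows "parity_preserving M \<longleftrightarrow> (\<forall>k<n. \<forall>l<n. M $$ (2*k, 2*l+1) = 0)"
proof -
  have "M $$ (2*k+1, 2*l) = M $$ (2*l, 2*k+1)" if "k < n" "l < n" for k l
    using arg_cong[OF assms(2), of "\<lambda>X. X $$ (2*k+1, 2*l)"] assms(1) that by simp
  then show ?thesis
    using assms(1) by (auto simp: parity_preserving_iff)
qed

lemma even_supported_iff: "v \<in> carrier_vec (2*n) \<Longrightarrow> even_supported v \<longleftrightarrow> (\<forall>k<n. v $ (2*k+1) = 0)"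
  unfolding even_supported_def by (auto simp: all_less_double)

lemma gaussian_channel_super:
  assumes S: "gaussian_superchannel n A Om Y db" and C: "gaussian_channel n T N d"
  shows "gaussian_channel n (super_T n A Om T) (super_N A Y N) (super_d A db d)"
proof -
  from S have A: "A \<in> carrier_mat (2*n) (2*n)" and O: "Om \<in> carrier_mat (2*n) (2*n)"
    and Y: "Y \<in> carrier_mat (2*n) (2*n)" and db: "db \<in> carrier_vec (2*n)"
    and "transpose_mat Y = Y" "Om * transpose_mat Om = 1\<^sub>m (2*n)"
    and HA: "psd_complex (2*n) (cmat Y + \<i> \<cdot>\<^sub>m cmat (Delta n) - \<i> \<cdot>\<^sub>m cmat (A * Delta n * transpose_mat A))"
    and "psd_complex (2*n) (\<i> \<cdot>\<^sub>m cmat (Delta n) - \<i> \<cdot>\<^sub>m cmat (Om * Delta n * transpose_mat Om))"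
    unfolding gaussian_superchannel_def by auto
  moreover from C have T: "T \<in> carrier_mat (2*n) (2*n)" and N: "N \<in> carrier_mat (2*n) (2*n)"
    and d: "d \<in> carrier_vec (2*n)" and "transpose_mat N = N" and "psd_real (2*n) N"
    and "psd_complex (2*n) (cmat N + \<i> \<cdot>\<^sub>m cmat (Delta n) - \<i> \<cdot>\<^sub>m cmat (T * Delta n * transpose_mat T))"
    unfolding gaussian_channel_def by auto
  moreover have "transpose_mat (super_N A Y N) = super_N A Y N"
  proof -
    have ANA: "A * N * transpose_mat A \<in> carrier_mat (2*n) (2*n)"
      using A N by simp
    show ?thesis
      unfolding super_N_def transpose_add[OF ANA Y] transpose_congruence[OF A N \<open>transpose_mat N = N\<close>]
        \<open>transpose_mat Y = Y\<close> by (rule refl)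
  qed
  ultimately show ?thesis
    unfolding gaussian_channel_def
    by (simp add: super_T_carrier super_N_carrier super_d_carrier psd_real_super_N psd_complex_super_T)
qed

lemma real_gaussian_channel_iff:
  "real_gaussian_channel n T N d \<longleftrightarrow>
   gaussian_channel n T N d \<and> even_supported d \<and> parity_preserving N \<and> (odd_rows_zero T \<or> parity_preserving T)"
proof (cases "gaussian_channel n T N d")
  case True
  then have "T \<in> carrier_mat (2*n) (2*n)" "N \<in> carrier_mat (2*n) (2*n)" "d \<in> carrier_vec (2*n)"
    "transpose_mat N = N"
    unfolding gaussian_channel_def by auto
  then show ?thesis
    unfolding real_gaussian_channel_def
    by (simp add: even_supported_iff parity_preserving_symmetric_iff odd_rows_zero_iff parity_preserving_iff)
qed (simp add: real_gaussian_channel_def)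

lemma odd_rows_zero_super_T:
  assumes "odd_rows_zero (A * T)" "A \<in> carrier_mat (2*n) (2*n)" "T \<in> carrier_mat (2*n) (2*n)"
    "Om \<in> carrier_mat (2*n) (2*n)"
  shows "odd_rows_zero (super_T n A Om T)"
proof -
  have "odd_rows_zero (A * T * Sigma n)"
    using assms(1) by (rule odd_rows_zero_mult) (use assms in simp)
  then have "odd_rows_zero (A * T * Sigma n * transpose_mat Om)"
    by (rule odd_rows_zero_mult) (use assms in simp)
  then show ?thesis
    unfolding super_T_def by (rule odd_rows_zero_mult) (use assms in simp)
qed

lemma real_gaussian_channel_super:
  assumes S: "gaussian_superchannel n A Om Y db"
    and db: "even_supported db" and Y: "parity_preserving Y"
    and AO: "odd_rows_zero A \<or> parity_preserving A \<and> parity_preserving Om"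
    and C: "real_gaussian_channel n T N d"
  shows "real_gaussian_channel n (super_T n A Om T) (super_N A Y N) (super_d A db d)"
proof -
  from S have A: "A \<in> carrier_mat (2*n) (2*n)" and O: "Om \<in> carrier_mat (2*n) (2*n)"
    and Yc: "Y \<in> carrier_mat (2*n) (2*n)" and dbc: "db \<in> carrier_vec (2*n)"
    unfolding gaussian_superchannel_def by auto
  from C have G: "gaussian_channel n T N d" and d: "even_supported d" and N: "parity_preserving N"
    and T: "odd_rows_zero T \<or> parity_preserving T"
    unfolding real_gaussian_channel_iff by auto
  from G have Tc: "T \<in> carrier_mat (2*n) (2*n)" and Nc: "N \<in> carrier_mat (2*n) (2*n)"
    and dc: "d \<in> carrier_vec (2*n)" and Nsym: "transpose_mat N = N"
    unfolding gaussian_channel_def by auto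
  have A_even: "odd_rows_zero A \<or> parity_preserving A"
    using AO by blast
  have "even_supported (super_d A db d)"
    unfolding super_d_def using A dc dbc
    by (intro even_supported_add even_supported_mult_mat_vec[OF A_even d] db) auto
  moreover have "parity_preserving (A * N * transpose_mat A)"
    using A_even
  proof
    assume "odd_rows_zero A"
    then have "odd_rows_zero (A * N * transpose_mat A)"
      using A Nc by (intro odd_rows_zero_mult) auto
    then show ?thesis
      using transpose_congruence[OF A Nc Nsym] by (intro symmetric_odd_rows_zero_parity_preserving)
  next
    assume "parity_preserving A"
    then show ?thesis
      using A Nc N by (intro parity_preserving_mult parity_preserving_transpose) auto
  qed
  then have "parity_preserving (super_N A Y N)"
    unfolding super_N_def using A Nc Yc Y by (intro parity_preserving_add) auto
  moreover have "odd_rows_zero (super_T n A Om T) \<or> parity_preserving (super_T n A Om T)"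
    using AO
  proof
    assume "odd_rows_zero A"
    then have "odd_rows_zero (A * T)"
      by (rule odd_rows_zero_mult) (use A Tc in simp)
    then show ?thesis
      using A Tc O by (intro disjI1 odd_rows_zero_super_T)
  next
    assume AO': "parity_preserving A \<and> parity_preserving Om"
    show ?thesis
      using T
    proof
      assume "odd_rows_zero T"
      then have "odd_rows_zero (A * T)"
        using A Tc AO' by (intro parity_preserving_mult_odd_rows_zero) auto
      then show ?thesis
        using A Tc O by (intro disjI1 odd_rows_zero_super_T)
    next
      assume "parity_preserving T"
      then show ?thesis
        unfolding super_T_def using A Tc O AO' Sigma_carrier
        by (intro disjI2 parity_preserving_mult parity_preserving_transpose parity_preserving_Sigma) auto
    qed
  qed
  ultimately show ?thesis
    using gaussian_channel_super[OF S G] by (simp add: real_gaussian_channel_iff)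
qed

section \<open>Test channels\<close>

lemma real_gaussian_channel_identity:
  assumes "d \<in> carrier_vec (2*n)" "even_supported d"
  shows "real_gaussian_channel n (1\<^sub>m (2*n)) (0\<^sub>m (2*n) (2*n)) d"
proof -
  have "1\<^sub>m (2*n) * Delta n * transpose_mat (1\<^sub>m (2*n)) = Delta n"
    by simp
  then have "psd_complex (2*n) (cmat (0\<^sub>m (2*n) (2*n)) + \<i> \<cdot>\<^sub>m cmat (Delta n)
      - \<i> \<cdot>\<^sub>m cmat (1\<^sub>m (2*n) * Delta n * transpose_mat (1\<^sub>m (2*n))))"
    by (simp only: psd_complex_iff_qform[OF zero_carrier_mat Delta_carrier Delta_carrier]) simp
  moreover have "psd_real (2*n) (0\<^sub>m (2*n) (2*n))" "parity_preserving (0\<^sub>m (2*n) (2*n) :: real mat)"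
    by (simp_all add: psd_real_def parity_preserving_def)
  ultimately show ?thesis
    using assms by (simp add: real_gaussian_channel_iff gaussian_channel_def parity_preserving_one)
qed

definition column_mat :: "nat \<Rightarrow> 'a::zero vec \<Rightarrow> nat \<Rightarrow> 'a mat" where
  "column_mat m w c = mat m m (\<lambda>(i,j). if j = c then w $ i else 0)"

lemma column_mat_dim [simp]: "dim_row (column_mat m w c) = m" "dim_col (column_mat m w c) = m"
  by (simp_all add: column_mat_def)

lemma column_mat_carrier [simp]: "column_mat m w c \<in> carrier_mat m m"
  by (simp add: column_mat_def)

lemma transpose_apply_column_mat: "r \<noteq> c \<Longrightarrow> transpose_apply m (column_mat m w c) z r = 0"
  by (simp add: transpose_apply_def column_mat_def)

lemma qform_Delta_single_support:
  assumes "\<And>r. r \<noteq> c \<Longrightarrow> x r = 0"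
  shows "qform (2*n) (Delta n) x = 0"
  unfolding qform_Delta
proof (intro sum.neutral ballI)
  fix k
  show "cnj (x (2*k)) * x (2*k+1) - cnj (x (2*k+1)) * x (2*k) = 0"
    using assms[of "2*k"] assms[of "2*k+1"] by (cases "2*k = c") auto
qed

text \<open>Since Delta has zero diagonal, T Delta T^T = 0 for T = w e_c^T, so unit noise suffices.\<close>
lemma real_gaussian_channel_column:
  assumes w: "w \<in> carrier_vec (2*n)" "\<forall>i<2*n. even i \<longrightarrow> w $ i = 0" and c: "c < 2*n" "odd c"
  shows "real_gaussian_channel n (column_mat (2*n) w c) (1\<^sub>m (2*n)) (0\<^sub>v (2*n))"
proof -
  have "psd_complex (2*n) (cmat (1\<^sub>m (2*n)) + \<i> \<cdot>\<^sub>m cmat (Delta n)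
      - \<i> \<cdot>\<^sub>m cmat (column_mat (2*n) w c * Delta n * transpose_mat (column_mat (2*n) w c)))"
    unfolding psd_complex_congruence_iff[OF one_carrier_mat column_mat_carrier]
    using qform_one_Delta_nonneg
    by (simp add: qform_Delta_single_support[OF transpose_apply_column_mat])
  moreover have "psd_real (2*n) (1\<^sub>m (2*n))"
    by (auto simp: psd_real_iff_qform qform_one less_eq_complex_def intro!: sum_nonneg)
  moreover have "parity_preserving (column_mat (2*n) w c)"
    using w c by (auto simp: parity_preserving_def column_mat_def)
  ultimately show ?thesis
    using w by (simp add: real_gaussian_channel_iff gaussian_channel_def even_supported_def parity_preserving_one)
qed

lemma mult_column_mat:
  assumes "A \<in> carrier_mat m m" "w \<in> carrier_vec m"
  shows "A * column_mat m w c = column_mat m (A *\<^sub>v w) c"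
proof (rule eq_matI)
  fix i j assume ij: "i < dim_row (column_mat m (A *\<^sub>v w) c)" "j < dim_col (column_mat m (A *\<^sub>v w) c)"
  have "(A * column_mat m w c) $$ (i,j) = (\<Sum>r<m. A $$ (i,r) * column_mat m w c $$ (r,j))"
    by (rule index_mult_mat_sum[OF assms(1) column_mat_carrier]) (use ij in auto)
  also have "\<dots> = column_mat m (A *\<^sub>v w) c $$ (i,j)"
    using assms ij
    by (cases "j = c") (auto simp: column_mat_def scalar_prod_def atLeast0LessThan intro!: sum.cong)
  finally show "(A * column_mat m w c) $$ (i,j) = column_mat m (A *\<^sub>v w) c $$ (i,j)" .
qed (use assms in auto)

lemma super_T_column_mat_index:
  assumes A: "A \<in> carrier_mat (2*n) (2*n)" and O: "Om \<in> carrier_mat (2*n) (2*n)"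
    and w: "w \<in> carrier_vec (2*n)" and ijc: "i < 2*n" "j < 2*n" "c < 2*n"
  shows "super_T n A Om (column_mat (2*n) w c) $$ (i,j) = (-1)^c * ((A *\<^sub>v w) $ i * Om $$ (j,c)) * (-1)^j"
proof -
  let ?X = "column_mat (2*n) (A *\<^sub>v w) c * Sigma n"
  have X: "?X \<in> carrier_mat (2*n) (2*n)"
    by (rule mult_carrier_mat[OF column_mat_carrier Sigma_carrier])
  have "(?X * transpose_mat Om) $$ (i,j) = (\<Sum>s<2*n. ?X $$ (i,s) * transpose_mat Om $$ (s,j))"
    by (rule index_mult_mat_sum[OF X]) (use O ijc in auto)
  also have "\<dots> = (\<Sum>s<2*n. if s = c then (-1)^c * ((A *\<^sub>v w) $ i * Om $$ (j,c)) else 0)"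
  proof (rule sum.cong[OF refl])
    fix s assume "s \<in> {..<2*n}"
    then show "?X $$ (i,s) * transpose_mat Om $$ (s,j) =
        (if s = c then (-1)^c * ((A *\<^sub>v w) $ i * Om $$ (j,c)) else 0)"
      using ijc O by (subst mult_Sigma_right[OF column_mat_carrier]) (auto simp: column_mat_def)
  qed
  finally have XO: "(?X * transpose_mat Om) $$ (i,j) = (-1)^c * ((A *\<^sub>v w) $ i * Om $$ (j,c))"
    using ijc by simp
  have XOc: "?X * transpose_mat Om \<in> carrier_mat (2*n) (2*n)"
    using X O by simp
  show ?thesis
    unfolding super_T_def mult_column_mat[OF A w] mult_Sigma_right[OF XOc ijc(1,2)] XO by (rule refl)
qed

lemma real_superchannel_column_test:
  assumes R: "real_gaussian_superchannel n A Om Y db"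
    and w: "w \<in> carrier_vec (2*n)" "\<forall>i<2*n. even i \<longrightarrow> w $ i = 0" and c: "c < 2*n" "odd c"
  shows "(\<forall>i<2*n. \<forall>j<2*n. odd i \<longrightarrow> (A *\<^sub>v w) $ i * Om $$ (j,c) = 0) \<or>
         (\<forall>i<2*n. \<forall>j<2*n. odd i \<noteq> odd j \<longrightarrow> (A *\<^sub>v w) $ i * Om $$ (j,c) = 0)"
proof -
  let ?T = "super_T n A Om (column_mat (2*n) w c)"
  from R have A: "A \<in> carrier_mat (2*n) (2*n)" and O: "Om \<in> carrier_mat (2*n) (2*n)"
    unfolding real_gaussian_superchannel_def gaussian_superchannel_def by auto
  have "real_gaussian_channel n ?T (super_N A Y (1\<^sub>m (2*n))) (super_d A db (0\<^sub>v (2*n)))"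
    using R real_gaussian_channel_column[OF w c] unfolding real_gaussian_superchannel_def by blast
  then have "odd_rows_zero ?T \<or> parity_preserving ?T"
    by (simp add: real_gaussian_channel_iff)
  moreover have "?T $$ (i,j) = 0 \<longleftrightarrow> (A *\<^sub>v w) $ i * Om $$ (j,c) = 0" if "i < 2*n" "j < 2*n" for i j
    using super_T_column_mat_index[OF A O w(1) that c(1)] by simp
  moreover have "?T \<in> carrier_mat (2*n) (2*n)"
    using A O by (simp add: super_T_carrier)
  ultimately show ?thesis
    unfolding odd_rows_zero_def parity_preserving_def by auto
qed

section \<open>Orthogonal matrices and necessity\<close>

lemma orthogonal_row_norm:
  fixes Q :: "real mat"
  assumes Q: "Q \<in> carrier_mat m m" and orth: "Q * transpose_mat Q = 1\<^sub>m m" and i: "i < m"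
  shows "(\<Sum>j<m. (Q $$ (i,j))\<^sup>2) = 1"
proof -
  have "(Q * transpose_mat Q) $$ (i,i) = (\<Sum>j<m. Q $$ (i,j) * transpose_mat Q $$ (j,i))"
    by (rule index_mult_mat_sum[OF Q]) (use Q i in auto)
  also have "\<dots> = (\<Sum>j<m. (Q $$ (i,j))\<^sup>2)"
    using Q i by (intro sum.cong refl) (simp add: power2_eq_square)
  finally show ?thesis
    using orth i by simp
qed

lemma orthogonal_col_norm:
  fixes Q :: "real mat"
  assumes Q: "Q \<in> carrier_mat m m" and orth: "Q * transpose_mat Q = 1\<^sub>m m" and j: "j < m"
  shows "(\<Sum>i<m. (Q $$ (i,j))\<^sup>2) = 1"
proof -
  have QT: "transpose_mat Q \<in> carrier_mat m m"
    using Q by simp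
  have "(transpose_mat Q * Q) $$ (j,j) = (\<Sum>i<m. transpose_mat Q $$ (j,i) * Q $$ (i,j))"
    by (rule index_mult_mat_sum[OF QT Q j j])
  also have "\<dots> = (\<Sum>i<m. (Q $$ (i,j))\<^sup>2)"
    using Q j by (intro sum.cong refl) (simp add: power2_eq_square)
  finally show ?thesis
    using mat_mult_left_right_inverse[OF Q QT orth] j by simp
qed

lemma orthogonal_col_nonzero:
  fixes Q :: "real mat"
  assumes "Q \<in> carrier_mat m m" "Q * transpose_mat Q = 1\<^sub>m m" "j < m"
  shows "\<exists>i<m. Q $$ (i,j) \<noteq> 0"
proof (rule ccontr)
  assume "\<not> ?thesis"
  then have "(\<Sum>i<m. (Q $$ (i,j))\<^sup>2) = 0"
    by (auto intro!: sum.neutral)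
  then show False
    using orthogonal_col_norm[OF assms] by simp
qed

text \<open>Counting squared entries by rows and by columns of the block indexed by P.\<close>
lemma orthogonal_block_triangular:
  fixes Q :: "real mat"
  assumes Q: "Q \<in> carrier_mat m m" and orth: "Q * transpose_mat Q = 1\<^sub>m m"
    and zero: "\<And>i j. i < m \<Longrightarrow> j < m \<Longrightarrow> P i \<Longrightarrow> \<not> P j \<Longrightarrow> Q $$ (i,j) = 0"
    and ij: "i < m" "j < m" "\<not> P i" "P j"
  shows "Q $$ (i,j) = 0"
proof -
  define I where "I = {..<m} \<inter> Collect P"
  define J where "J = {..<m} - Collect P"
  let ?f = "\<lambda>i j. (Q $$ (i,j))\<^sup>2"
  have split: "(\<Sum>k<m. g k) = (\<Sum>k\<in>I. g k) + (\<Sum>k\<in>J. g k)" for g :: "nat \<Rightarrow> real"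
    unfolding I_def J_def by (rule sum.Int_Diff) simp
  have "(\<Sum>j\<in>I. ?f i j) = (\<Sum>j<m. ?f i j)" if "i \<in> I" for i
  proof -
    have "(\<Sum>j\<in>J. ?f i j) = 0"
      using that zero by (auto simp: I_def J_def intro!: sum.neutral)
    then show ?thesis
      by (simp add: split[of "?f i"])
  qed
  then have "(\<Sum>i\<in>I. \<Sum>j\<in>I. ?f i j) = (\<Sum>i\<in>I. \<Sum>j<m. ?f i j)"
    by (rule sum.cong[OF refl])
  also have "\<dots> = card I"
    using orthogonal_row_norm[OF Q orth] by (simp add: I_def)
  finally have rows: "(\<Sum>j\<in>I. \<Sum>i\<in>I. ?f i j) = card I"
    by (subst sum.swap)
  have "(\<Sum>j\<in>I. \<Sum>i\<in>I. ?f i j) + (\<Sum>j\<in>I. \<Sum>i\<in>J. ?f i j) = (\<Sum>j\<in>I. \<Sum>i<m. ?f i j)"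
    by (simp add: split[of "\<lambda>i. ?f i _"] sum.distrib)
  also have "\<dots> = card I"
    using orthogonal_col_norm[OF Q orth] by (simp add: I_def)
  finally have "(\<Sum>j\<in>I. \<Sum>i\<in>J. ?f i j) = 0"
    using rows by simp
  then have "?f i j = 0"
    using ij by (simp add: I_def J_def sum_nonneg_eq_0_iff sum_nonneg)
  then show ?thesis
    by simp
qed

text \<open>Here v stands for A w, and the hypothesis says that the test channel w e_c^T is sent to a real
  channel for every odd c.\<close>
lemma column_tests_force_parity:
  fixes v :: "nat \<Rightarrow> real"
  assumes O: "Om \<in> carrier_mat (2*n) (2*n)" and orth: "Om * transpose_mat Om = 1\<^sub>m (2*n)"
    and i0: "i0 < 2*n" "odd i0" "v i0 \<noteq> 0"
    and tests: "\<And>c. c < 2*n \<Longrightarrow> odd c \<Longrightarrow>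
      (\<forall>i<2*n. \<forall>j<2*n. odd i \<longrightarrow> v i * Om $$ (j,c) = 0) \<or>
      (\<forall>i<2*n. \<forall>j<2*n. odd i \<noteq> odd j \<longrightarrow> v i * Om $$ (j,c) = 0)"
  shows "(\<forall>i<2*n. \<forall>j<2*n. even i \<and> odd j \<longrightarrow> Om $$ (i,j) = 0) \<and> (\<forall>i<2*n. even i \<longrightarrow> v i = 0)"
proof -
  have block: "\<forall>i<2*n. \<forall>j<2*n. odd i \<noteq> odd j \<longrightarrow> v i * Om $$ (j,c) = 0" if c: "c < 2*n" "odd c" for c
  proof -
    obtain j where j: "j < 2*n" "Om $$ (j,c) \<noteq> 0"
      using orthogonal_col_nonzero[OF O orth c(1)] by blast
    then have "v i0 * Om $$ (j,c) \<noteq> 0"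
      using i0 by simp
    then have "\<not> (\<forall>i<2*n. \<forall>j<2*n. odd i \<longrightarrow> v i * Om $$ (j,c) = 0)"
      using i0 j by blast
    then show ?thesis
      using tests[OF c] by blast
  qed
  have O_block: "\<forall>i<2*n. \<forall>j<2*n. even i \<and> odd j \<longrightarrow> Om $$ (i,j) = 0"
  proof (intro allI impI)
    fix i j assume "i < 2*n" "j < 2*n" "even i \<and> odd j"
    then have "v i0 * Om $$ (i,j) = 0"
      using block[of j] i0 by auto
    then show "Om $$ (i,j) = 0"
      using i0 by simp
  qed
  have "1 < 2*n"
    using i0 by (cases n) auto
  then obtain j where j: "j < 2*n" "Om $$ (j,1) \<noteq> 0"
    using orthogonal_col_nonzero[OF O orth] by blast
  have "odd j"
  proof (rule ccontr)
    assume "\<not> odd j"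
    then have "Om $$ (j,1) = 0"
      using O_block j(1) \<open>1 < 2*n\<close> by simp
    with j(2) show False by simp
  qed
  have "\<forall>i<2*n. even i \<longrightarrow> v i = 0"
  proof (intro allI impI)
    fix i assume "i < 2*n" "even i"
    then have "v i * Om $$ (j,1) = 0"
      using block[of 1] \<open>1 < 2*n\<close> j \<open>odd j\<close> by auto
    then show "v i = 0"
      using j by simp
  qed
  with O_block show ?thesis
    by blast
qed

lemma super_N_zero: "A \<in> carrier_mat m m \<Longrightarrow> Y \<in> carrier_mat m m \<Longrightarrow> super_N A Y (0\<^sub>m m m) = Y"
  by (simp add: super_N_def)

lemma real_superchannel_conditions:
  assumes R: "real_gaussian_superchannel n A Om Y db"
  shows "even_supported db \<and> parity_preserving Y \<and>
    (odd_rows_zero A \<or> parity_preserving A \<and> parity_preserving Om)"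
proof -
  from R have H: "\<And>T N d. real_gaussian_channel n T N d \<Longrightarrow>
      real_gaussian_channel n (super_T n A Om T) (super_N A Y N) (super_d A db d)"
    unfolding real_gaussian_superchannel_def by auto
  from R have A: "A \<in> carrier_mat (2*n) (2*n)" and O: "Om \<in> carrier_mat (2*n) (2*n)"
    and Yc: "Y \<in> carrier_mat (2*n) (2*n)" and dbc: "db \<in> carrier_vec (2*n)"
    and orth: "Om * transpose_mat Om = 1\<^sub>m (2*n)"
    unfolding real_gaussian_superchannel_def gaussian_superchannel_def by auto
  have identity: "even_supported (A *\<^sub>v d + db) \<and> parity_preserving Y"
    if "d \<in> carrier_vec (2*n)" "even_supported d" for d
    using H[OF real_gaussian_channel_identity[OF that]]
    by (simp add: real_gaussian_channel_iff super_d_def super_N_zero[OF A Yc])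
  have db: "even_supported db" and Y: "parity_preserving Y"
    using identity[of "0\<^sub>v (2*n)"] A dbc by (auto simp: even_supported_def)
  have A_odd_even: "A $$ (i,j) = 0" if ij: "i < 2*n" "j < 2*n" "odd i" "even j" for i j
  proof -
    have "even_supported (A *\<^sub>v unit_vec (2*n) j + db)"
      using identity[of "unit_vec (2*n) j"] ij by (auto simp: even_supported_def)
    then show ?thesis
      using ij A dbc db unfolding even_supported_def by simp
  qed
  have "odd_rows_zero A \<or> parity_preserving A \<and> parity_preserving Om"
  proof (cases "\<forall>i<2*n. \<forall>j<2*n. odd i \<and> odd j \<longrightarrow> A $$ (i,j) = 0")
    case True
    then have "odd_rows_zero A"
      using A A_odd_even unfolding odd_rows_zero_def by auto
    then show ?thesis
      by blast
  next
    case False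
    then obtain i0 a where i0: "i0 < 2*n" "odd i0" and a: "a < 2*n" "odd a" and nz: "A $$ (i0,a) \<noteq> 0"
      by blast
    have test: "(\<forall>i<2*n. \<forall>j<2*n. even i \<and> odd j \<longrightarrow> Om $$ (i,j) = 0) \<and>
        (\<forall>i<2*n. even i \<longrightarrow> (A *\<^sub>v w) $ i = 0)"
      if w: "w \<in> carrier_vec (2*n)" "\<forall>i<2*n. even i \<longrightarrow> w $ i = 0" and "(A *\<^sub>v w) $ i0 \<noteq> 0" for w
      using column_tests_force_parity[OF O orth i0, of "\<lambda>i. (A *\<^sub>v w) $ i"]
        real_superchannel_column_test[OF R w] that(3) by blast
    have unit: "\<forall>i<2*n. even i \<longrightarrow> (unit_vec (2*n) k :: real vec) $ i = 0" if "odd k" for k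
      using that by (auto simp: unit_vec_def)
    have O_block: "\<forall>i<2*n. \<forall>j<2*n. even i \<and> odd j \<longrightarrow> Om $$ (i,j) = 0"
      and A_even_a: "\<forall>i<2*n. even i \<longrightarrow> A $$ (i,a) = 0"
      using test[OF unit_vec_carrier unit[OF a(2)]] A i0 a nz by auto
    have A_even_odd: "A $$ (i,b) = 0" if ib: "i < 2*n" "b < 2*n" "even i" "odd b" for i b
    proof (cases "A $$ (i0,b) = 0")
      case False
      then show ?thesis
        using test[OF unit_vec_carrier unit[OF ib(4)]] A i0 ib by auto
    next
      case True
      let ?w = "unit_vec (2*n) a + unit_vec (2*n) b :: real vec"
      have Aw: "(A *\<^sub>v ?w) $ k = A $$ (k,a) + A $$ (k,b)" if "k < 2*n" for k
        using A a ib that by (simp add: mult_add_distrib_mat_vec)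
      have "?w \<in> carrier_vec (2*n)"
        by simp
      moreover have "\<forall>i<2*n. even i \<longrightarrow> ?w $ i = 0"
        using unit[OF a(2)] unit[OF ib(4)] by simp
      moreover have "(A *\<^sub>v ?w) $ i0 \<noteq> 0"
        using Aw[OF i0(1)] True nz by simp
      ultimately have "(A *\<^sub>v ?w) $ i = 0"
        using test ib by blast
      then show ?thesis
        using Aw[OF ib(1)] A_even_a ib by simp
    qed
    have "parity_preserving A"
      using A A_odd_even A_even_odd unfolding parity_preserving_def by auto
    moreover have "parity_preserving Om"
      unfolding parity_preserving_def
    proof (intro allI impI)
      fix i j assume ij: "i < dim_row Om" "j < dim_col Om" "odd i \<noteq> odd j"
      show "Om $$ (i,j) = 0"
      proof (cases "even i")
        case True
        then show ?thesis using O_block ij O by auto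
      next
        case False
        then show ?thesis
          using orthogonal_block_triangular[OF O orth, of even i j] O_block ij O by auto
      qed
    qed
    ultimately show ?thesis
      by blast
  qed
  with db Y show ?thesis
    by blast
qed

lemma real_gaussian_superchannel_iff:
  assumes "gaussian_superchannel n A Om Y db"
  shows "real_gaussian_superchannel n A Om Y db \<longleftrightarrow>
    even_supported db \<and> parity_preserving Y \<and> (odd_rows_zero A \<or> parity_preserving A \<and> parity_preserving Om)"
  using assms real_superchannel_conditions[of n A Om Y db] real_gaussian_channel_super[OF assms]
  unfolding real_gaussian_superchannel_def by blast

theorem theorem1:
  fixes n :: nat and A Om Y :: "real mat" and db :: "real vec"
  assumes "n \<ge> 1"
    and "gaussian_superchannel n A Om Y db"
  shows "real_gaussian_superchannel n A Om Y db \<longleftrightarrow>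
    ((\<forall>k<n. db $ (2*k+1) = 0) \<and> (\<forall>k<n. \<forall>l<n. Y $$ (2*k, 2*l+1) = 0)) \<and>
    ((\<forall>k<n. \<forall>l<n. A $$ (2*k+1, 2*l) = 0 \<and> A $$ (2*k+1, 2*l+1) = 0) \<or>
     (\<forall>k<n. \<forall>l<n. A $$ (2*k, 2*l+1) = 0 \<and> A $$ (2*k+1, 2*l) = 0 \<and>
                  Om $$ (2*k, 2*l+1) = 0 \<and> Om $$ (2*k+1, 2*l) = 0))"
proof -
  from assms(2) have "A \<in> carrier_mat (2*n) (2*n)" "Om \<in> carrier_mat (2*n) (2*n)"
    "Y \<in> carrier_mat (2*n) (2*n)" "db \<in> carrier_vec (2*n)" "transpose_mat Y = Y"
    unfolding gaussian_superchannel_def by auto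
  then show ?thesis
    unfolding real_gaussian_superchannel_iff[OF assms(2)]
    by (auto simp: even_supported_iff parity_preserving_symmetric_iff odd_rows_zero_iff parity_preserving_iff)
qed

end
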